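(* Let $X$ be an uncountable Polish space. Then \[ \mathscr{L}_X(\mathrm{FS})=\mathscr{L}_X(\mathcal{H})=\Sigma^1_1(X), \] where $\Sigma^1_1(X)$ is the family of all analytic subsets of $X$. Moreover, for every nonempty analytic set $C\subseteq X$ there exists a sequence $y=(y_n)_{n\in\omega}\in X^\omega$ such that $C=\Lambda_y(\mathrm{FS})=\Lambda_y(\mathcal{H})$.
   Context: $\omega$ denotes the set of nonnegative integers. For infinite $D\subseteq\omega$, $\mathrm{FS}(D)=\{\sum_{n\in\alpha}n:\alpha\subseteq D\text{ finite nonempty}\}$. A set $S\subseteq\omega$ is an IP-set if $\mathrm{FS}(D)\subseteq S$ for some infinite $D\subseteq\omega$. The Hindman ideal is $\mathcal{H}=\{S\subseteq\omega: S\text{ is not an IP-set}\}$. For a sequence $y:\omega\to X$ in a topological space $X$: $\eta\in X$ is an $\mathrm{FS}$-limit (IP-limit) point of $y$ if there is an infinite $D\subseteq\omega$ such that for every neighborhood $U$ of $\eta$ there is a finite $K\subseteq\omega$ with $y_n\in U$ for all $n\in\mathrm{FS}(D\setminus K)$; $\Lambda_y(\mathrm{FS})$ is the set of such points. $\eta$ is an $\mathcal{H}$-limit point of $y$ if there is $E\subseteq\omega$ with $E\notin\mathcal{H}$ such that the subsequence $(y_n)_{n\in E}$ converges to $\eta$ in the ordinary sense; $\Lambda_y(\mathcal{H})$ is the set of such points. $\mathscr{L}_X(\mathrm{FS})=\{A\subseteq X:\exists y\in X^{\omega}\ A=\Lambda_y(\mathrm{FS})\}\cup\{\emptyset\}$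 and $\mathscr{L}_X(\mathcal{H})=\{A\subseteq X:\exists y\in X^{\omega}\ A=\Lambda_y(\mathcal{H})\}\cup\{\emptyset\}$. *)

theory Defs
  imports "HOL-Analysis.Analysis"
begin

definition FS :: "nat set \<Rightarrow> nat set" where
  "FS D = {\<Sum>\<alpha> | \<alpha>. \<alpha> \<subseteq> D \<and> finite \<alpha> \<and> \<alpha> \<noteq> {}}"

definition IP_set :: "nat set \<Rightarrow> bool" where
  "IP_set S \<longleftrightarrow> (\<exists>D. infinite D \<and> FS D \<subseteq> S)"

definition Hindman_ideal :: "nat set set" where
  "Hindman_ideal = {S. \<not> IP_set S}"

definition FS_limits :: "(nat \<Rightarrow> 'a::topological_space) \<Rightarrow> 'a set" where
  "FS_limits y = {\<eta>. \<exists>D. infinite D \<and>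
      (\<forall>U. open U \<and> \<eta> \<in> U \<longrightarrow> (\<exists>K. finite K \<and> (\<forall>n \<in> FS (D - K). y n \<in> U)))}"

definition H_limits :: "(nat \<Rightarrow> 'a::topological_space) \<Rightarrow> 'a set" where
  "H_limits y = {\<eta>. \<exists>E. E \<notin> Hindman_ideal \<and>
      (\<forall>U. open U \<and> \<eta> \<in> U \<longrightarrow> finite {n \<in> E. y n \<notin> U})}"

definition L_FS :: "'a::topological_space set set" where
  "L_FS = {A. \<exists>y :: nat \<Rightarrow> 'a. A = FS_limits y} \<union> {{}}"

definition L_H :: "'a::topological_space set set" where
  "L_H = {A. \<exists>y :: nat \<Rightarrow> 'a. A = H_limits y} \<union> {{}}"

text \<open>Analytic sets: empty, or a continuous image of the Baire space \<omega>^\<omega>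
  (nat \<Rightarrow> nat with the product topology of discrete copies of nat).\<close>
definition analytic_set :: "'a::topological_space set \<Rightarrow> bool" where
  "analytic_set A \<longleftrightarrow> A = {} \<or>
     (\<exists>f :: (nat \<Rightarrow> nat) \<Rightarrow> 'a. continuous_on UNIV f \<and> f ` UNIV = A)"

definition Sigma11 :: "'a::topological_space set set" where
  "Sigma11 = {A. analytic_set A}"

end

(*
  Limit sets are analytic: an FS- or H-limit point \<eta> along an infinite set D is coded by a
  point of the Baire space listing D increasingly together with moduli m k beyond which the
  finite sums from D stay (1/2)^k-close to \<eta>. The codes form a closed set on which the
  decoding map is continuous, and a closed subset of the Baire space is a retract of it.

  Conversely, let C be the range of a continuous f on the Baire space. Let a number n code
  (through the even positions of its binary digits) a finite chain of initial segments, and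
  let y n be f of the longest one, padded with zeros. The codes of the initial segments of x
  generate an IP-set along which y converges to f x, so f x is an H-limit point, hence an
  FS-limit point. If \<eta> \<noteq> f 0 is an FS-limit point along D, all finite sums from a tail of D are
  codes; as adding codes must not produce a carry, the chains coded by the elements of D fit
  together into one infinite branch x, and \<eta> = f x.
*)

theory Submission
  imports Defs "HOL-Library.Sublist" "HOL-Library.Nat_Bijection"
begin

section \<open>Cylinders and closed subsets of the Baire space\<close>

definition cylinder :: "(nat \<Rightarrow> 'a) \<Rightarrow> nat \<Rightarrow> (nat \<Rightarrow> 'a) set" where
  "cylinder x N = {z. \<forall>i<N. z i = x i}"

lemma self_in_cylinder [simp]: "x \<in> cylinder x N"
  by (simp add: cylinder_def)

lemma open_cylinder: "open (cylinder (x :: nat \<Rightarrow> nat) N)"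
proof -
  have "cylinder x N = (\<Inter>i<N. (\<lambda>z. z i) -` {x i})"
    by (auto simp: cylinder_def)
  moreover have "open ((\<lambda>z::nat \<Rightarrow> nat. z i) -` {x i})" for i
    by (rule open_vimage) (auto simp: open_discrete)
  ultimately show ?thesis
    by auto
qed

lemma open_imp_cylinder:
  assumes "open (U :: (nat \<Rightarrow> nat) set)" "x \<in> U"
  obtains N where "cylinder x N \<subseteq> U"
proof -
  have "openin (product_topology (\<lambda>i. euclidean) UNIV) U"
    using assms(1) by (simp add: open_fun_def)
  from product_topology_open_contains_basis[OF this assms(2)]
  obtain X where X: "x \<in> Pi\<^sub>E UNIV X" "Pi\<^sub>E UNIV X \<subseteq> U"
      "finite {i. X i \<noteq> topspace euclidean}"
    by auto
  obtain N where N: "{i. X i \<noteq> topspace euclidean} \<subseteq> {..<N}"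
    using X(3) finite_nat_bounded by blast
  have "cylinder x N \<subseteq> Pi\<^sub>E UNIV X"
  proof
    fix z assume z: "z \<in> cylinder x N"
    have "z i \<in> X i" for i
    proof (cases "i < N")
      case True
      then show ?thesis
        using X(1) z by (auto simp: cylinder_def)
    next
      case False
      then show ?thesis
        using N by auto
    qed
    then show "z \<in> Pi\<^sub>E UNIV X"
      by auto
  qed
  with X(2) show thesis
    using that by blast
qed

lemma continuous_on_cylinderI:
  fixes h :: "(nat \<Rightarrow> nat) \<Rightarrow> 'b::topological_space"
  assumes "\<And>x V. x \<in> S \<Longrightarrow> open V \<Longrightarrow> h x \<in> V \<Longrightarrow> \<exists>N. h ` (S \<inter> cylinder x N) \<subseteq> V"
  shows "continuous_on S h"
  unfolding continuous_on_topological
proof (intro ballI allI impI)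
  fix x V assume "x \<in> S" "open V" "h x \<in> V"
  then obtain N where "h ` (S \<inter> cylinder x N) \<subseteq> V"
    using assms by blast
  then show "\<exists>A. open A \<and> x \<in> A \<and> (\<forall>y\<in>S. y \<in> A \<longrightarrow> h y \<in> V)"
    by (intro exI[of _ "cylinder x N"]) (auto simp: open_cylinder)
qed

lemma closed_locally_constant:
  assumes "\<And>p. \<exists>N. \<forall>q\<in>cylinder p N. P q \<longleftrightarrow> P p"
  shows "closed {p :: nat \<Rightarrow> nat. P p}"
proof -
  have "open (- {p. P p})"
  proof (rule Topological_Spaces.openI)
    fix p assume "p \<in> - {p. P p}"
    moreover obtain N where "\<forall>q\<in>cylinder p N. P q \<longleftrightarrow> P p"
      using assms by blast
    ultimately have "cylinder p N \<subseteq> - {p. P p}"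
      by blast
    then show "\<exists>T. open T \<and> p \<in> T \<and> T \<subseteq> - {p. P p}"
      by (intro exI[of _ "cylinder p N"] conjI open_cylinder self_in_cylinder)
  qed
  then show ?thesis
    by (simp add: closed_def)
qed

lemma closed_imp_cylinder_limit:
  assumes "closed (F :: (nat \<Rightarrow> nat) set)" "\<And>N. F \<inter> cylinder x N \<noteq> {}"
  shows "x \<in> F"
proof (rule ccontr)
  assume "x \<notin> F"
  moreover have "open (- F)"
    using assms(1) by (simp add: open_Compl)
  ultimately obtain N where "cylinder x N \<subseteq> - F"
    using open_imp_cylinder by (metis ComplI)
  then show False
    using assms(2) by blast
qed

definition initial_segments :: "(nat \<Rightarrow> 'a) set \<Rightarrow> 'a list set" where
  "initial_segments F = {map z [0..<n] | z n. z \<in> F}"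

primrec retraction_path :: "(nat \<Rightarrow> nat) set \<Rightarrow> (nat \<Rightarrow> nat) \<Rightarrow> nat \<Rightarrow> nat list" where
  "retraction_path F x 0 = []"
| "retraction_path F x (Suc n) =
     (let s = retraction_path F x n in
      if s @ [x n] \<in> initial_segments F then s @ [x n]
      else s @ [LEAST a. s @ [a] \<in> initial_segments F])"

definition Baire_retraction :: "(nat \<Rightarrow> nat) set \<Rightarrow> (nat \<Rightarrow> nat) \<Rightarrow> nat \<Rightarrow> nat" where
  "Baire_retraction F x i = retraction_path F x (Suc i) ! i"

lemma length_retraction_path [simp]: "length (retraction_path F x n) = n"
  by (induction n) (simp_all add: Let_def)

lemma take_retraction_path: "n \<le> m \<Longrightarrow> take n (retraction_path F x m) = retraction_path F x n"
proof (induction m)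
  case (Suc m)
  then show ?case
    by (cases "n = Suc m") (simp_all add: Let_def)
qed simp

lemma retraction_path_eq: "retraction_path F x n = map (Baire_retraction F x) [0..<n]"
proof (rule nth_equalityI)
  fix i assume "i < length (retraction_path F x n)"
  then have "retraction_path F x n ! i = take (Suc i) (retraction_path F x n) ! i"
    by simp
  also have "\<dots> = Baire_retraction F x i"
    using \<open>i < _\<close> by (simp add: take_retraction_path Baire_retraction_def)
  finally show "retraction_path F x n ! i = map (Baire_retraction F x) [0..<n] ! i"
    using \<open>i < _\<close> by simp
qed simp

lemma initial_segments_extend:
  assumes "s \<in> initial_segments F"
  shows "\<exists>a. s @ [a] \<in> initial_segments F"
proof -
  obtain z n where "z \<in> F" "s = map z [0..<n]"
    using assms by (auto simp: initial_segments_def)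
  then have "s @ [z n] \<in> initial_segments F"
    unfolding initial_segments_def by (intro CollectI exI[of _ z] exI[of _ "Suc n"]) simp
  then show ?thesis ..
qed

lemma retraction_path_in_initial_segments:
  assumes "F \<noteq> {}"
  shows "retraction_path F x n \<in> initial_segments F"
proof (induction n)
  case 0
  then show ?case
    using assms by (auto simp: initial_segments_def)
next
  case (Suc n)
  then show ?case
    using LeastI_ex[OF initial_segments_extend[OF Suc]] by (simp add: Let_def)
qed

lemma retraction_path_cylinder:
  "x' \<in> cylinder x n \<Longrightarrow> retraction_path F x' n = retraction_path F x n"
  by (induction n) (auto simp: cylinder_def Let_def)

lemma Baire_retraction_in:
  assumes "closed F" "F \<noteq> {}"
  shows "Baire_retraction F x \<in> F"
proof (rule closed_imp_cylinder_limit[OF assms(1)])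
  fix N
  obtain z n where z: "z \<in> F" "map z [0..<n] = retraction_path F x N"
    using retraction_path_in_initial_segments[OF assms(2), of x N]
    by (auto simp: initial_segments_def)
  then have "n = N"
    by (metis diff_zero length_map length_retraction_path length_upt)
  with z have "z \<in> cylinder (Baire_retraction F x) N"
    by (simp add: cylinder_def retraction_path_eq)
  with z(1) show "F \<inter> cylinder (Baire_retraction F x) N \<noteq> {}"
    by blast
qed

lemma Baire_retraction_fixed:
  assumes "x \<in> F"
  shows "Baire_retraction F x = x"
proof -
  have path: "retraction_path F x n = map x [0..<n]" for n
  proof (induction n)
    case (Suc n)
    have "map x [0..<n] @ [x n] \<in> initial_segments F"
      using assms unfolding initial_segments_def by (intro CollectI exI[of _ x] exI[of _ "Suc n"]) simp
    with Suc show ?case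
      by simp
  qed simp
  show ?thesis
  proof
    fix i
    show "Baire_retraction F x i = x i"
      unfolding Baire_retraction_def path by (simp add: nth_append)
  qed
qed

lemma continuous_Baire_retraction: "continuous_on UNIV (Baire_retraction F)"
proof (rule continuous_on_cylinderI)
  fix x V assume "open V" "Baire_retraction F x \<in> V"
  then obtain N where N: "cylinder (Baire_retraction F x) N \<subseteq> V"
    using open_imp_cylinder by blast
  have "Baire_retraction F x' \<in> cylinder (Baire_retraction F x) N" if "x' \<in> cylinder x N" for x'
    using retraction_path_cylinder[OF that, of F] by (simp add: cylinder_def retraction_path_eq)
  with N show "\<exists>N. Baire_retraction F ` (UNIV \<inter> cylinder x N) \<subseteq> V"
    by blast
qed

lemma analytic_set_empty: "analytic_set {}"
  by (simp add: analytic_set_def)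

lemma analytic_set_image_closed:
  assumes "closed (F :: (nat \<Rightarrow> nat) set)" "continuous_on F g"
  shows "analytic_set (g ` F)"
proof (cases "F = {}")
  case False
  let ?r = "Baire_retraction F"
  have "continuous_on UNIV (g \<circ> ?r)"
    using Baire_retraction_in[OF assms(1) False]
    by (intro continuous_on_compose continuous_Baire_retraction continuous_on_subset[OF assms(2)]) auto
  moreover have "range (g \<circ> ?r) = g ` F"
  proof
    show "range (g \<circ> ?r) \<subseteq> g ` F"
      using Baire_retraction_in[OF assms(1) False] by auto
    show "g ` F \<subseteq> range (g \<circ> ?r)"
      using Baire_retraction_fixed by (metis comp_apply image_mono image_subsetI rangeI)
  qed
  ultimately show ?thesis
    unfolding analytic_set_def by blast
qed (simp add: analytic_set_empty)

section \<open>Limits along finite sums\<close>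

lemma geometric_Cauchy_lim:
  fixes g :: "nat \<Rightarrow> 'a::complete_space"
  assumes rate: "\<And>k l. k \<le> l \<Longrightarrow> dist (g k) (g l) \<le> (1/2)^k"
  shows "g \<longlonglongrightarrow> lim g" and "dist (g k) (lim g) \<le> (1/2)^k"
proof -
  have "Cauchy g"
  proof (rule metric_CauchyI)
    fix e :: real assume "e > 0"
    then obtain k where k: "(1/2)^k < e/2"
      using real_arch_pow_inv[of "e/2" "1/2"] by auto
    have "dist (g m) (g n) < e" if "k \<le> m" "k \<le> n" for m n
    proof -
      have "dist (g m) (g n) \<le> dist (g k) (g m) + dist (g k) (g n)"
        by (rule dist_triangle3)
      also have "\<dots> \<le> (1/2)^k + (1/2)^k"
        using rate that by (intro add_mono) auto
      finally show ?thesis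
        using k by simp
    qed
    then show "\<exists>M. \<forall>m\<ge>M. \<forall>n\<ge>M. dist (g m) (g n) < e"
      by blast
  qed
  then show lim: "g \<longlonglongrightarrow> lim g"
    by (simp add: Cauchy_convergent_iff convergent_LIMSEQ_iff)
  have "\<forall>\<^sub>F l in sequentially. dist (g k) (g l) \<le> (1/2)^k"
    using eventually_ge_at_top[of k] by eventually_elim (rule rate)
  then show "dist (g k) (lim g) \<le> (1/2)^k"
    by (intro Lim_dist_ubound[OF _ lim]) simp_all
qed

lemma LIMSEQ_dist_geometric:
  assumes "\<And>k. dist (g k) l \<le> (1/2)^k"
  shows "g \<longlonglongrightarrow> l"
proof -
  have "(\<lambda>k. dist (g k) l) \<longlonglongrightarrow> 0"
    by (rule Lim_null_comparison[OF always_eventually LIMSEQ_realpow_zero[of "1/2"]]) (simp_all add: assms)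
  then show ?thesis
    by (subst tendsto_dist_iff)
qed

lemma continuous_on_lim_locally_constant:
  fixes \<Gamma> :: "(nat \<Rightarrow> nat) \<Rightarrow> nat \<Rightarrow> 'a::complete_space"
  assumes local: "\<And>p k. \<exists>N. \<forall>q\<in>cylinder p N. \<Gamma> q k = \<Gamma> p k"
    and rate: "\<And>p k l. p \<in> F \<Longrightarrow> k \<le> l \<Longrightarrow> dist (\<Gamma> p k) (\<Gamma> p l) \<le> (1/2)^k"
  shows "continuous_on F (\<lambda>p. lim (\<Gamma> p))"
proof (rule continuous_on_cylinderI)
  fix p V assume "p \<in> F" "open V" "lim (\<Gamma> p) \<in> V"
  then obtain e where "e > 0" and e: "ball (lim (\<Gamma> p)) e \<subseteq> V"
    using open_contains_ball by blast
  then obtain k where k: "(1/2)^k < e/2"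
    using real_arch_pow_inv[of "e/2" "1/2"] by auto
  obtain N where N: "\<forall>q\<in>cylinder p N. \<Gamma> q k = \<Gamma> p k"
    using local by blast
  have "lim (\<Gamma> q) \<in> V" if "q \<in> F \<inter> cylinder p N" for q
  proof -
    have "\<Gamma> q k = \<Gamma> p k"
      using N that by blast
    then have "dist (lim (\<Gamma> p)) (lim (\<Gamma> q)) \<le> dist (\<Gamma> p k) (lim (\<Gamma> p)) + dist (\<Gamma> q k) (lim (\<Gamma> q))"
      using dist_triangle3[of "lim (\<Gamma> p)" "lim (\<Gamma> q)" "\<Gamma> p k"] by simp
    also have "\<dots> \<le> (1/2)^k + (1/2)^k"
      using that \<open>p \<in> F\<close> rate by (intro add_mono geometric_Cauchy_lim(2)) auto
    finally have "dist (lim (\<Gamma> p)) (lim (\<Gamma> q)) < e"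
      using k by simp
    then show ?thesis
      using e by (simp add: subset_iff)
  qed
  then show "\<exists>N. (\<lambda>p. lim (\<Gamma> p)) ` (F \<inter> cylinder p N) \<subseteq> V"
    by blast
qed

text \<open>FS- and H-limits differ only in what it means for a finite set \<open>\<alpha>\<close> of indices to lie
  beyond a threshold \<open>M\<close>; \<open>R M \<alpha>\<close> is that test.\<close>

definition sum_limits :: "(nat \<Rightarrow> 'a::topological_space) \<Rightarrow> (nat \<Rightarrow> nat set \<Rightarrow> bool) \<Rightarrow> 'a set" where
  "sum_limits y R = {\<eta>. \<exists>D. infinite D \<and> (\<forall>U. open U \<and> \<eta> \<in> U \<longrightarrow>
      (\<exists>M. \<forall>\<alpha>. finite \<alpha> \<and> \<alpha> \<noteq> {} \<and> \<alpha> \<subseteq> D \<and> R M \<alpha> \<longrightarrow> y (\<Sum>\<alpha>) \<in> U))}"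

lemma sum_limitsI:
  assumes "infinite D"
    and "\<And>U. open U \<Longrightarrow> \<eta> \<in> U \<Longrightarrow>
      \<exists>M. \<forall>\<alpha>. finite \<alpha> \<and> \<alpha> \<noteq> {} \<and> \<alpha> \<subseteq> D \<and> R M \<alpha> \<longrightarrow> y (\<Sum>\<alpha>) \<in> U"
  shows "\<eta> \<in> sum_limits y R"
  using assms unfolding sum_limits_def by blast

lemma sum_limitsE:
  assumes "\<eta> \<in> sum_limits y R"
  obtains D where "infinite D"
    and "\<And>U. open U \<Longrightarrow> \<eta> \<in> U \<Longrightarrow>
      \<exists>M. \<forall>\<alpha>. finite \<alpha> \<and> \<alpha> \<noteq> {} \<and> \<alpha> \<subseteq> D \<and> R M \<alpha> \<longrightarrow> y (\<Sum>\<alpha>) \<in> U"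
  using assms unfolding sum_limits_def mem_Collect_eq by (elim exE conjE) (rule that, auto)

lemma sum_limits_antimono:
  assumes "\<And>M \<alpha>. finite \<alpha> \<Longrightarrow> \<alpha> \<noteq> {} \<Longrightarrow> R M \<alpha> \<Longrightarrow> R' M \<alpha>"
  shows "sum_limits y R' \<subseteq> sum_limits y R"
proof
  fix \<eta> assume "\<eta> \<in> sum_limits y R'"
  then obtain D where D: "infinite D"
    and M: "\<And>U. open U \<Longrightarrow> \<eta> \<in> U \<Longrightarrow>
      \<exists>M. \<forall>\<alpha>. finite \<alpha> \<and> \<alpha> \<noteq> {} \<and> \<alpha> \<subseteq> D \<and> R' M \<alpha> \<longrightarrow> y (\<Sum>\<alpha>) \<in> U"
    by (rule sum_limitsE) auto
  show "\<eta> \<in> sum_limits y R"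
  proof (rule sum_limitsI[OF D])
    fix U :: "'a set" assume "open U" "\<eta> \<in> U"
    then obtain M where "\<forall>\<alpha>. finite \<alpha> \<and> \<alpha> \<noteq> {} \<and> \<alpha> \<subseteq> D \<and> R' M \<alpha> \<longrightarrow> y (\<Sum>\<alpha>) \<in> U"
      using M by blast
    then show "\<exists>M. \<forall>\<alpha>. finite \<alpha> \<and> \<alpha> \<noteq> {} \<and> \<alpha> \<subseteq> D \<and> R M \<alpha> \<longrightarrow> y (\<Sum>\<alpha>) \<in> U"
      using assms by (intro exI[of _ M]) simp
  qed
qed

lemma FS_I: "finite \<alpha> \<Longrightarrow> \<alpha> \<noteq> {} \<Longrightarrow> \<alpha> \<subseteq> D \<Longrightarrow> \<Sum>\<alpha> \<in> FS D"
  unfolding FS_def by auto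

lemma FS_E:
  assumes "n \<in> FS D"
  obtains \<alpha> where "n = \<Sum>\<alpha>" "finite \<alpha>" "\<alpha> \<noteq> {}" "\<alpha> \<subseteq> D"
  using assms unfolding FS_def by auto

lemma FS_limits_eq_sum_limits: "FS_limits y = sum_limits y (\<lambda>M \<alpha>. \<alpha> \<subseteq> {M..})"
proof -
  have "(\<exists>K. finite K \<and> (\<forall>n\<in>FS (D - K). y n \<in> U)) \<longleftrightarrow>
        (\<exists>M. \<forall>\<alpha>. finite \<alpha> \<and> \<alpha> \<noteq> {} \<and> \<alpha> \<subseteq> D \<and> \<alpha> \<subseteq> {M..} \<longrightarrow> y (\<Sum>\<alpha>) \<in> U)"
    for D and U :: "'a set"
  proof
    assume "\<exists>K. finite K \<and> (\<forall>n\<in>FS (D - K). y n \<in> U)"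
    then obtain K M where K: "\<forall>n\<in>FS (D - K). y n \<in> U" "K \<subseteq> {..<M}"
      using finite_nat_bounded by meson
    have "y (\<Sum>\<alpha>) \<in> U" if "finite \<alpha>" "\<alpha> \<noteq> {}" "\<alpha> \<subseteq> D" "\<alpha> \<subseteq> {M..}" for \<alpha>
    proof -
      have "\<alpha> \<subseteq> D - K"
      proof
        fix t assume "t \<in> \<alpha>"
        with that(3,4) K(2) show "t \<in> D - K"
          by (auto simp: subset_iff not_less[symmetric])
      qed
      with that have "\<Sum>\<alpha> \<in> FS (D - K)"
        by (intro FS_I)
      with K(1) show ?thesis
        by blast
    qed
    then show "\<exists>M. \<forall>\<alpha>. finite \<alpha> \<and> \<alpha> \<noteq> {} \<and> \<alpha> \<subseteq> D \<and> \<alpha> \<subseteq> {M..} \<longrightarrow> y (\<Sum>\<alpha>) \<in> U"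
      by auto
  next
    assume "\<exists>M. \<forall>\<alpha>. finite \<alpha> \<and> \<alpha> \<noteq> {} \<and> \<alpha> \<subseteq> D \<and> \<alpha> \<subseteq> {M..} \<longrightarrow> y (\<Sum>\<alpha>) \<in> U"
    then obtain M where M: "\<forall>\<alpha>. finite \<alpha> \<and> \<alpha> \<noteq> {} \<and> \<alpha> \<subseteq> D \<and> \<alpha> \<subseteq> {M..} \<longrightarrow> y (\<Sum>\<alpha>) \<in> U"
      by auto
    have "y n \<in> U" if n: "n \<in> FS (D - {..<M})" for n
    proof -
      obtain \<alpha> where "n = \<Sum>\<alpha>" "finite \<alpha>" "\<alpha> \<noteq> {}" "\<alpha> \<subseteq> D - {..<M}"
        using n by (rule FS_E)
      with M show ?thesis
        by (auto simp: subset_iff not_less)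
    qed
    then show "\<exists>K. finite K \<and> (\<forall>n\<in>FS (D - K). y n \<in> U)"
      by (intro exI[of _ "{..<M}"]) auto
  qed
  then show ?thesis
    unfolding FS_limits_def sum_limits_def by simp
qed

lemma IP_set_FS: "infinite D \<Longrightarrow> IP_set (FS D)"
  unfolding IP_set_def by blast

lemma H_limits_subset_sum_limits: "H_limits y \<subseteq> sum_limits y (\<lambda>M \<alpha>. M \<le> \<Sum>\<alpha>)"
proof
  fix \<eta> assume "\<eta> \<in> H_limits y"
  then obtain E D where D: "infinite D" "FS D \<subseteq> E"
    and E: "\<And>U. open U \<Longrightarrow> \<eta> \<in> U \<Longrightarrow> finite {n \<in> E. y n \<notin> U}"
    by (auto simp: H_limits_def Hindman_ideal_def IP_set_def)
  show "\<eta> \<in> sum_limits y (\<lambda>M \<alpha>. M \<le> \<Sum>\<alpha>)"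
  proof (rule sum_limitsI[OF D(1)])
    fix U :: "'a set" assume U: "open U" "\<eta> \<in> U"
    obtain M where M: "{n \<in> E. y n \<notin> U} \<subseteq> {..<M}"
      using finite_nat_bounded[OF E[OF U]] by blast
    have "y (\<Sum>\<alpha>) \<in> U" if "finite \<alpha>" "\<alpha> \<noteq> {}" "\<alpha> \<subseteq> D" "M \<le> \<Sum>\<alpha>" for \<alpha>
    proof -
      have "\<Sum>\<alpha> \<in> E"
        using FS_I[OF that(1-3)] D(2) by blast
      with M that(4) show ?thesis
        by (auto simp: subset_iff)
    qed
    then show "\<exists>M. \<forall>\<alpha>. finite \<alpha> \<and> \<alpha> \<noteq> {} \<and> \<alpha> \<subseteq> D \<and> M \<le> \<Sum>\<alpha> \<longrightarrow> y (\<Sum>\<alpha>) \<in> U"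
      by auto
  qed
qed

lemma sum_limits_subset_H_limits: "sum_limits y (\<lambda>M \<alpha>. M \<le> \<Sum>\<alpha>) \<subseteq> H_limits y"
proof
  fix \<eta> assume "\<eta> \<in> sum_limits y (\<lambda>M \<alpha>. M \<le> \<Sum>\<alpha>)"
  then obtain D where D: "infinite D"
    and M: "\<And>U. open U \<Longrightarrow> \<eta> \<in> U \<Longrightarrow>
      \<exists>M. \<forall>\<alpha>. finite \<alpha> \<and> \<alpha> \<noteq> {} \<and> \<alpha> \<subseteq> D \<and> M \<le> \<Sum>\<alpha> \<longrightarrow> y (\<Sum>\<alpha>) \<in> U"
    by (rule sum_limitsE) auto
  have "finite {n \<in> FS D. y n \<notin> U}" if U: "open U" "\<eta> \<in> U" for U
  proof -
    obtain M where M: "\<forall>\<alpha>. finite \<alpha> \<and> \<alpha> \<noteq> {} \<and> \<alpha> \<subseteq> D \<and> M \<le> \<Sum>\<alpha> \<longrightarrow> y (\<Sum>\<alpha>) \<in> U"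
      using M[OF U] by auto
    have "{n \<in> FS D. y n \<notin> U} \<subseteq> {..<M}"
    proof
      fix n assume n: "n \<in> {n \<in> FS D. y n \<notin> U}"
      then obtain \<alpha> where "n = \<Sum>\<alpha>" "finite \<alpha>" "\<alpha> \<noteq> {}" "\<alpha> \<subseteq> D"
        by (auto elim: FS_E)
      with M n show "n \<in> {..<M}"
        by (cases "M \<le> n") auto
    qed
    then show ?thesis
      by (rule finite_subset) simp
  qed
  then show "\<eta> \<in> H_limits y"
    unfolding H_limits_def Hindman_ideal_def mem_Collect_eq
    by (intro exI[of _ "FS D"]) (simp add: IP_set_FS[OF D])
qed

lemma H_limits_eq_sum_limits: "H_limits y = sum_limits y (\<lambda>M \<alpha>. M \<le> \<Sum>\<alpha>)"
  using H_limits_subset_sum_limits sum_limits_subset_H_limits by (rule subset_antisym)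

lemma H_limits_subset_FS_limits: "H_limits y \<subseteq> FS_limits y"
  unfolding H_limits_eq_sum_limits FS_limits_eq_sum_limits
proof (rule sum_limits_antimono)
  fix M :: nat and \<alpha> :: "nat set"
  assume "finite \<alpha>" "\<alpha> \<noteq> {}" "\<alpha> \<subseteq> {M..}"
  then obtain a where "a \<in> \<alpha>" "M \<le> a"
    by blast
  with \<open>finite \<alpha>\<close> show "M \<le> \<Sum>\<alpha>"
    using member_le_sum[of a \<alpha> id] by simp
qed

section \<open>Limit sets are analytic\<close>

definition evens :: "(nat \<Rightarrow> 'a) \<Rightarrow> nat \<Rightarrow> 'a" where
  "evens p i = p (2 * i)"

definition odds :: "(nat \<Rightarrow> 'a) \<Rightarrow> nat \<Rightarrow> 'a" where
  "odds p i = p (2 * i + 1)"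

definition interleave :: "(nat \<Rightarrow> 'a) \<Rightarrow> (nat \<Rightarrow> 'a) \<Rightarrow> nat \<Rightarrow> 'a" where
  "interleave e m n = (if even n then e (n div 2) else m (n div 2))"

lemma evens_interleave [simp]: "evens (interleave e m) = e"
  and odds_interleave [simp]: "odds (interleave e m) = m"
  by (simp_all add: evens_def odds_def interleave_def fun_eq_iff)

lemma evens_cylinder: "q \<in> cylinder p N \<Longrightarrow> 2 * i < N \<Longrightarrow> evens q i = evens p i"
  and odds_cylinder: "q \<in> cylinder p N \<Longrightarrow> 2 * i + 1 < N \<Longrightarrow> odds q i = odds p i"
  by (simp_all add: cylinder_def evens_def odds_def)

lemma evens_image_cylinder:
  assumes "finite \<beta>" "q \<in> cylinder p N" "2 * \<Sum>\<beta> < N"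
  shows "evens q ` \<beta> = evens p ` \<beta>"
proof (rule image_cong[OF refl])
  fix j assume "j \<in> \<beta>"
  then have "j \<le> \<Sum>\<beta>"
    using assms(1) member_le_sum[of j \<beta> id] by simp
  then show "evens q j = evens p j"
    using assms(2,3) by (intro evens_cylinder) auto
qed

definition code_seq :: "(nat \<Rightarrow> 'a) \<Rightarrow> (nat \<Rightarrow> nat) \<Rightarrow> nat \<Rightarrow> 'a" where
  "code_seq y p k = y (evens p (odds p k))"

text \<open>A code \<open>p\<close> interleaves an increasing enumeration \<open>evens p\<close> of an infinite set \<open>D\<close>
  with moduli \<open>odds p\<close>: the finite sums from \<open>D\<close> beyond \<open>odds p k\<close> stay within \<open>(1/2)^k\<close> of
  \<open>code_seq y p k\<close>.\<close>

definition limit_codes :: "(nat \<Rightarrow> 'a::metric_space) \<Rightarrow> (nat \<Rightarrow> nat set \<Rightarrow> bool) \<Rightarrow> (nat \<Rightarrow> nat) set" where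
  "limit_codes y R = {p. strict_mono (evens p) \<and> mono (odds p) \<and>
     (\<forall>k \<beta>. finite \<beta> \<and> \<beta> \<noteq> {} \<and> R (odds p k) (evens p ` \<beta>) \<longrightarrow>
        dist (y (\<Sum>(evens p ` \<beta>))) (code_seq y p k) \<le> (1/2)^k)}"

lemma code_seq_cylinder:
  "q \<in> cylinder p N \<Longrightarrow> 2 * (k + odds p k) + 1 < N \<Longrightarrow> code_seq y q k = code_seq y p k"
  by (simp add: cylinder_def code_seq_def evens_def odds_def)

lemma closed_limit_codes: "closed (limit_codes y R)"
proof -
  have eq: "limit_codes y R =
      {p. \<forall>i. evens p i < evens p (Suc i)} \<inter> {p. \<forall>k. odds p k \<le> odds p (Suc k)} \<inter>
      {p. \<forall>k \<beta>. finite \<beta> \<and> \<beta> \<noteq> {} \<and> R (odds p k) (evens p ` \<beta>) \<longrightarrow>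
        dist (y (\<Sum>(evens p ` \<beta>))) (code_seq y p k) \<le> (1/2)^k}"
    by (auto simp: limit_codes_def strict_mono_Suc_iff mono_iff_le_Suc)
  have c1: "closed {p :: nat \<Rightarrow> nat. \<forall>i. evens p i < evens p (Suc i)}"
  proof (intro closed_Collect_all closed_locally_constant)
    show "\<exists>N. \<forall>q\<in>cylinder p N. evens q i < evens q (Suc i) \<longleftrightarrow> evens p i < evens p (Suc i)"
      for i and p :: "nat \<Rightarrow> nat"
      by (rule exI[of _ "2 * i + 3"]) (simp add: cylinder_def evens_def)
  qed
  have c2: "closed {p :: nat \<Rightarrow> nat. \<forall>k. odds p k \<le> odds p (Suc k)}"
  proof (intro closed_Collect_all closed_locally_constant)
    show "\<exists>N. \<forall>q\<in>cylinder p N. odds q k \<le> odds q (Suc k) \<longleftrightarrow> odds p k \<le> odds p (Suc k)"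
      for k and p :: "nat \<Rightarrow> nat"
      by (rule exI[of _ "2 * k + 4"]) (simp add: cylinder_def odds_def)
  qed
  have c3: "closed {p :: nat \<Rightarrow> nat. \<forall>k \<beta>. finite \<beta> \<and> \<beta> \<noteq> {} \<and> R (odds p k) (evens p ` \<beta>) \<longrightarrow>
        dist (y (\<Sum>(evens p ` \<beta>))) (code_seq y p k) \<le> (1/2)^k}"
  proof (intro closed_Collect_all closed_locally_constant)
    fix k \<beta> and p :: "nat \<Rightarrow> nat"
    let ?P = "\<lambda>p. finite \<beta> \<and> \<beta> \<noteq> {} \<and> R (odds p k) (evens p ` \<beta>) \<longrightarrow>
        dist (y (\<Sum>(evens p ` \<beta>))) (code_seq y p k) \<le> (1/2)^k"
    show "\<exists>N. \<forall>q\<in>cylinder p N. ?P q \<longleftrightarrow> ?P p"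
    proof (cases "finite \<beta>")
      case True
      define N where "N = 2 * (k + odds p k + \<Sum>\<beta>) + 2"
      have "?P q \<longleftrightarrow> ?P p" if q: "q \<in> cylinder p N" for q
      proof -
        have "odds q k = odds p k"
          using q by (rule odds_cylinder) (simp add: N_def)
        moreover have "evens q ` \<beta> = evens p ` \<beta>"
          using True q by (rule evens_image_cylinder) (simp add: N_def)
        moreover have "code_seq y q k = code_seq y p k"
          using q by (rule code_seq_cylinder) (simp add: N_def)
        ultimately show ?thesis
          by simp
      qed
      then show ?thesis
        by blast
    qed simp
  qed
  show ?thesis
    unfolding eq by (intro closed_Int c1 c2 c3)
qed

lemma limit_codesD:
  assumes "p \<in> limit_codes y R"
  shows "strict_mono (evens p)" "mono (odds p)"
    and "finite \<beta> \<Longrightarrow> \<beta> \<noteq> {} \<Longrightarrow> R (odds p k) (evens p ` \<beta>) \<Longrightarrow>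
      dist (y (\<Sum>(evens p ` \<beta>))) (code_seq y p k) \<le> (1/2)^k"
  using assms by (auto simp: limit_codes_def)

definition sum_threshold :: "(nat \<Rightarrow> nat set \<Rightarrow> bool) \<Rightarrow> bool" where
  "sum_threshold R \<longleftrightarrow> (\<forall>M M' \<alpha>. M \<le> M' \<longrightarrow> R M' \<alpha> \<longrightarrow> R M \<alpha>) \<and> (\<forall>M j. M \<le> j \<longrightarrow> R M {j})"

lemma sum_thresholdD:
  assumes "sum_threshold R"
  shows "M \<le> M' \<Longrightarrow> R M' \<alpha> \<Longrightarrow> R M \<alpha>" and "M \<le> j \<Longrightarrow> R M {j}"
  using assms unfolding sum_threshold_def by blast+

lemma code_seq_rate:
  assumes R: "sum_threshold R" and p: "p \<in> limit_codes y R" and "k \<le> l"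
  shows "dist (code_seq y p k) (code_seq y p l) \<le> (1/2)^k"
proof -
  have "odds p k \<le> odds p l"
    using limit_codesD(2)[OF p] \<open>k \<le> l\<close> by (rule monoD)
  also have "\<dots> \<le> evens p (odds p l)"
    using limit_codesD(1)[OF p] by (rule strict_mono_imp_increasing)
  finally have "R (odds p k) (evens p ` {odds p l})"
    by (simp add: sum_thresholdD(2)[OF R])
  then have "dist (y (\<Sum>(evens p ` {odds p l}))) (code_seq y p k) \<le> (1/2)^k"
    by (intro limit_codesD(3)[OF p]) auto
  then show ?thesis
    by (simp add: code_seq_def dist_commute)
qed

lemma lim_code_seq_in_sum_limits:
  fixes y :: "nat \<Rightarrow> 'a::complete_space"
  assumes R: "sum_threshold R" and p: "p \<in> limit_codes y R"
  shows "lim (code_seq y p) \<in> sum_limits y R"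
proof -
  let ?d = "evens p" and ?\<eta> = "lim (code_seq y p)"
  have inj: "inj ?d"
    using limit_codesD(1)[OF p] by (rule strict_mono_imp_inj_on)
  have near: "dist (code_seq y p k) ?\<eta> \<le> (1/2)^k" for k
    using code_seq_rate[OF R p] by (rule geometric_Cauchy_lim(2))
  show ?thesis
  proof (rule sum_limitsI)
    show "infinite (range ?d)"
      using inj by (rule range_inj_infinite)
  next
    fix U assume "open U" "?\<eta> \<in> U"
    then obtain e where "e > 0" and e: "ball ?\<eta> e \<subseteq> U"
      using open_contains_ball by blast
    then obtain k where k: "(1/2)^k < e/2"
      using real_arch_pow_inv[of "e/2" "1/2"] by auto
    have "y (\<Sum>\<alpha>) \<in> U"
      if \<alpha>: "finite \<alpha>" "\<alpha> \<noteq> {}" "\<alpha> \<subseteq> range ?d" "R (odds p k) \<alpha>" for \<alpha>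
    proof -
      define \<beta> where "\<beta> = ?d -` \<alpha>"
      have \<alpha>_eq: "?d ` \<beta> = \<alpha>"
        using \<alpha>(3) by (auto simp: \<beta>_def)
      have "finite \<beta>"
        using \<alpha>(1) inj by (simp add: \<beta>_def finite_vimageI)
      moreover have "\<beta> \<noteq> {}"
        using \<alpha>(2) \<alpha>_eq by auto
      moreover have "R (odds p k) (?d ` \<beta>)"
        using \<alpha>(4) \<alpha>_eq by simp
      ultimately have "dist (y (\<Sum>(?d ` \<beta>))) (code_seq y p k) \<le> (1/2)^k"
        by (rule limit_codesD(3)[OF p])
      then have "dist (y (\<Sum>\<alpha>)) ?\<eta> < e"
        using near[of k] dist_triangle[of "y (\<Sum>\<alpha>)" ?\<eta> "code_seq y p k"] k
        unfolding \<alpha>_eq by linarith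
      with e show ?thesis
        by (auto simp: dist_commute)
    qed
    then show "\<exists>M. \<forall>\<alpha>. finite \<alpha> \<and> \<alpha> \<noteq> {} \<and> \<alpha> \<subseteq> range ?d \<and> R M \<alpha> \<longrightarrow> y (\<Sum>\<alpha>) \<in> U"
      by auto
  qed
qed

lemma limit_code_of_moduli:
  assumes R: "sum_threshold R" and D: "infinite D"
    and Mk: "\<And>k \<alpha>. finite \<alpha> \<Longrightarrow> \<alpha> \<noteq> {} \<Longrightarrow> \<alpha> \<subseteq> D \<Longrightarrow> R (Mk k) \<alpha> \<Longrightarrow>
      dist \<eta> (y (\<Sum>\<alpha>)) < (1/2)^Suc k"
  obtains p where "p \<in> limit_codes y R" "code_seq y p \<longlonglongrightarrow> \<eta>"
proof -
  define d where "d = enumerate D"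
  define m where "m k = (\<Sum>i\<le>k. Mk i)" for k
  define p where "p = interleave d m"
  have d: "strict_mono d" "d j \<in> D" "j \<le> d j" for j
    using D by (simp_all add: d_def strict_mono_enumerate enumerate_in_set le_enumerate)
  have "mono m"
    unfolding mono_iff_le_Suc by (simp add: m_def)
  have close: "dist \<eta> (y (\<Sum>(d ` \<beta>))) < (1/2)^Suc k"
    if "finite \<beta>" "\<beta> \<noteq> {}" "R (m k) (d ` \<beta>)" for \<beta> k
  proof -
    have "R (Mk k) (d ` \<beta>)"
      using sum_thresholdD(1)[OF R _ that(3)] member_le_sum[of k "{..k}" Mk] by (simp add: m_def)
    moreover have "d ` \<beta> \<subseteq> D"
      using d(2) by blast
    ultimately show ?thesis
      using that(1,2) by (intro Mk) simp_all
  qed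
  have seq: "dist \<eta> (code_seq y p k) < (1/2)^Suc k" for k
    using close[of "{m k}" k] sum_thresholdD(2)[OF R d(3)] by (simp add: code_seq_def p_def)
  have "p \<in> limit_codes y R"
  proof -
    have "dist (y (\<Sum>(d ` \<beta>))) (code_seq y p k) \<le> (1/2)^k"
      if "finite \<beta>" "\<beta> \<noteq> {}" "R (m k) (d ` \<beta>)" for k \<beta>
    proof -
      have "dist (y (\<Sum>(d ` \<beta>))) (code_seq y p k) \<le>
          dist \<eta> (y (\<Sum>(d ` \<beta>))) + dist \<eta> (code_seq y p k)"
        by (rule dist_triangle3)
      also have "\<dots> \<le> (1/2)^Suc k + (1/2)^Suc k"
        using close[OF that] seq[of k] by simp
      finally show ?thesis
        by simp
    qed
    with d(1) \<open>mono m\<close> show ?thesis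
      by (simp add: limit_codes_def p_def)
  qed
  moreover have "code_seq y p \<longlonglongrightarrow> \<eta>"
  proof (rule LIMSEQ_dist_geometric)
    fix k
    have "(1/2::real)^Suc k \<le> (1/2)^k"
      by (rule power_decreasing) simp_all
    with seq[of k] show "dist (code_seq y p k) \<eta> \<le> (1/2)^k"
      by (simp only: dist_commute)
  qed
  ultimately show thesis
    by (rule that)
qed

lemma sum_limit_has_code:
  assumes R: "sum_threshold R" and \<eta>: "\<eta> \<in> sum_limits y R"
  obtains p where "p \<in> limit_codes y R" "code_seq y p \<longlonglongrightarrow> \<eta>"
proof -
  obtain D where D: "infinite D"
    and M: "\<And>U. open U \<Longrightarrow> \<eta> \<in> U \<Longrightarrow>
      \<exists>M. \<forall>\<alpha>. finite \<alpha> \<and> \<alpha> \<noteq> {} \<and> \<alpha> \<subseteq> D \<and> R M \<alpha> \<longrightarrow> y (\<Sum>\<alpha>) \<in> U"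
    using \<eta> by (rule sum_limitsE) auto
  have "\<forall>k. \<exists>M. \<forall>\<alpha>. finite \<alpha> \<and> \<alpha> \<noteq> {} \<and> \<alpha> \<subseteq> D \<and> R M \<alpha> \<longrightarrow> y (\<Sum>\<alpha>) \<in> ball \<eta> ((1/2)^Suc k)"
    by (intro allI M) simp_all
  then obtain Mk where Mk: "\<And>k \<alpha>. finite \<alpha> \<Longrightarrow> \<alpha> \<noteq> {} \<Longrightarrow> \<alpha> \<subseteq> D \<Longrightarrow> R (Mk k) \<alpha> \<Longrightarrow>
      dist \<eta> (y (\<Sum>\<alpha>)) < (1/2)^Suc k"
    unfolding mem_ball by metis
  show thesis
    by (rule limit_code_of_moduli[where y = y and \<eta> = \<eta>, OF R D Mk that])
qed

lemma sum_limits_eq_code_limits: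
  fixes y :: "nat \<Rightarrow> 'a::complete_space"
  assumes R: "sum_threshold R"
  shows "sum_limits y R = (\<lambda>p. lim (code_seq y p)) ` limit_codes y R"
proof
  show "sum_limits y R \<subseteq> (\<lambda>p. lim (code_seq y p)) ` limit_codes y R"
  proof
    fix \<eta> assume "\<eta> \<in> sum_limits y R"
    then obtain p where "p \<in> limit_codes y R" "code_seq y p \<longlonglongrightarrow> \<eta>"
      by (rule sum_limit_has_code[OF R]) auto
    then show "\<eta> \<in> (\<lambda>p. lim (code_seq y p)) ` limit_codes y R"
      by (auto intro!: image_eqI limI[symmetric])
  qed
  show "(\<lambda>p. lim (code_seq y p)) ` limit_codes y R \<subseteq> sum_limits y R"
    using lim_code_seq_in_sum_limits[OF R] by auto
qed

lemma analytic_sum_limits: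
  fixes y :: "nat \<Rightarrow> 'a::complete_space"
  assumes R: "sum_threshold R"
  shows "analytic_set (sum_limits y R)"
  unfolding sum_limits_eq_code_limits[OF R]
proof (rule analytic_set_image_closed[OF closed_limit_codes])
  have "\<exists>N. \<forall>q\<in>cylinder p N. code_seq y q k = code_seq y p k" for p k
    using code_seq_cylinder[of _ p "2 * (k + odds p k) + 2" k] by auto
  then show "continuous_on (limit_codes y R) (\<lambda>p. lim (code_seq y p))"
    by (rule continuous_on_lim_locally_constant[OF _ code_seq_rate[OF R]])
qed

lemma analytic_FS_limits: "analytic_set (FS_limits (y :: nat \<Rightarrow> 'a::complete_space))"
  unfolding FS_limits_eq_sum_limits by (rule analytic_sum_limits) (auto simp: sum_threshold_def)

lemma analytic_H_limits: "analytic_set (H_limits (y :: nat \<Rightarrow> 'a::complete_space))"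
  unfolding H_limits_eq_sum_limits by (rule analytic_sum_limits) (auto simp: sum_threshold_def)

section \<open>Every analytic set is a limit set\<close>

definition prefix_chain :: "'a list set \<Rightarrow> bool" where
  "prefix_chain A \<longleftrightarrow> (\<forall>s\<in>A. \<forall>t\<in>A. prefix s t \<or> prefix t s)"

lemma prefix_chain_inj_length: "prefix_chain U \<Longrightarrow> inj_on length U"
  unfolding prefix_chain_def inj_on_def prefix_def by force

lemma prefix_chain_finite_shorter:
  assumes "prefix_chain U"
  shows "finite {s\<in>U. length s < N}"
proof (rule inj_on_finite[where B = "{..<N}"])
  show "inj_on length {s\<in>U. length s < N}"
    using prefix_chain_inj_length[OF assms] by (rule inj_on_subset) auto
qed auto

lemma prefix_nth: "prefix s t \<Longrightarrow> i < length s \<Longrightarrow> s ! i = t ! i"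
  by (auto simp: prefix_def nth_append)

lemma infinite_prefix_chain_branch:
  assumes chain: "prefix_chain U" and "infinite U"
  shows "\<exists>x. \<forall>s\<in>U. s = map x [0..<length s]"
proof -
  have long: "\<exists>s. s \<in> U \<and> i < length s" for i
  proof (rule ccontr)
    assume "\<nexists>s. s \<in> U \<and> i < length s"
    then have "U \<subseteq> {s\<in>U. length s < Suc i}"
      by auto
    with prefix_chain_finite_shorter[OF chain] \<open>infinite U\<close> show False
      using finite_subset by blast
  qed
  define x where "x i = (SOME s. s \<in> U \<and> i < length s) ! i" for i
  have "s ! i = x i" if "s \<in> U" "i < length s" for s i
  proof -
    define t where "t = (SOME s. s \<in> U \<and> i < length s)"
    have t: "t \<in> U" "i < length t"
      using someI_ex[OF long[of i]] by (simp_all add: t_def)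
    then have "prefix s t \<or> prefix t s"
      using chain that(1) by (simp add: prefix_chain_def)
    then show ?thesis
      using t(2) that(2) prefix_nth by (fastforce simp: x_def t_def[symmetric])
  qed
  then have "s = map x [0..<length s]" if "s \<in> U" for s
    using that by (intro nth_equalityI) simp_all
  then show ?thesis
    by blast
qed

lemma set_encode_Un_disjoint:
  "finite A \<Longrightarrow> finite B \<Longrightarrow> A \<inter> B = {} \<Longrightarrow> set_encode (A \<union> B) = set_encode A + set_encode B"
  by (simp add: set_encode_def sum.union_disjoint)

lemma set_encode_image_Suc: "finite A \<Longrightarrow> set_encode (Suc ` A) = 2 * set_encode A"
  by (simp add: set_encode_def sum.reindex sum_distrib_left)

lemma set_decode_add_disjoint:
  assumes "set_decode a \<inter> set_decode b = {}"
  shows "set_decode (a + b) = set_decode a \<union> set_decode b"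
proof -
  have "a + b = set_encode (set_decode a \<union> set_decode b)"
    using assms by (simp add: set_encode_Un_disjoint)
  then show ?thesis
    by simp
qed

definition even_bits :: "nat \<Rightarrow> bool" where
  "even_bits n \<longleftrightarrow> (\<forall>i\<in>set_decode n. even i)"

lemma set_decode_add_even:
  assumes "even_bits a" "even_bits b" "even_bits (a + b)"
  shows "set_decode a \<inter> set_decode b = {}"
proof (rule ccontr)
  define A B where "A = set_decode a" and "B = set_decode b"
  assume "A \<inter> B \<noteq> {}"
  then obtain i where i: "i \<in> A \<inter> B"
    by blast
  have fin: "finite A" "finite B"
    by (simp_all add: A_def B_def)
  have "(A - B) \<union> (A \<inter> B) = A" "(B - A) \<union> (A \<inter> B) = B"
    by blast+
  then have "a = set_encode ((A - B) \<union> (A \<inter> B))" "b = set_encode ((B - A) \<union> (A \<inter> B))"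
    by (simp_all add: A_def B_def)
  moreover have "(A - B) \<inter> (A \<inter> B) = {}" "(B - A) \<inter> (A \<inter> B) = {}"
    by blast+
  ultimately have ea: "a = set_encode (A - B) + set_encode (A \<inter> B)"
    and eb: "b = set_encode (B - A) + set_encode (A \<inter> B)"
    using fin by (simp_all add: set_encode_Un_disjoint)
  have disj: "((A - B) \<union> (B - A)) \<inter> Suc ` (A \<inter> B) = {}"
    using assms(1,2) by (auto simp: A_def B_def even_bits_def)
  \<comment> \<open>the digits common to \<open>a\<close> and \<open>b\<close> carry one place up\<close>
  have "set_encode ((A - B) \<union> (B - A) \<union> Suc ` (A \<inter> B)) =
      set_encode (A - B) + set_encode (B - A) + 2 * set_encode (A \<inter> B)"
    using fin disj set_encode_Un_disjoint[of "A - B" "B - A"]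
    by (simp add: set_encode_Un_disjoint set_encode_image_Suc Diff_Int_distrib2 Int_commute)
  also have "\<dots> = a + b"
    using ea eb by linarith
  finally have "set_decode (a + b) = (A - B) \<union> (B - A) \<union> Suc ` (A \<inter> B)"
    using fin by (metis finite_Diff finite_Int finite_Un finite_imageI set_encode_inverse)
  then have "Suc i \<in> set_decode (a + b)"
    using i by blast
  then have "even (Suc i)"
    using assms(3) unfolding even_bits_def by blast
  moreover have "even i"
    using assms(1) i by (simp add: A_def even_bits_def)
  ultimately show False
    by simp
qed

text \<open>A finite set of sequences is coded by setting the binary digits \<open>2 * list_encode s\<close>.
  Since only even digits are used, a sum of two codes is a code only if no carry occurs,
  i.e.\ if the coded sets are disjoint (\<open>set_decode_add_even\<close>).\<close>

definition lists_code :: "nat list set \<Rightarrow> nat" where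
  "lists_code A = set_encode ((\<lambda>s. 2 * list_encode s) ` A)"

definition code_lists :: "nat \<Rightarrow> nat list set" where
  "code_lists n = {s. 2 * list_encode s \<in> set_decode n}"

lemma inj_double_list_encode: "inj (\<lambda>s. 2 * list_encode s)"
  by (simp add: inj_def list_encode_eq)

lemma finite_code_lists [simp]: "finite (code_lists n)"
proof -
  have "code_lists n = (\<lambda>s. 2 * list_encode s) -` set_decode n"
    by (auto simp: code_lists_def)
  then show ?thesis
    by (simp add: finite_vimageI inj_double_list_encode)
qed

lemma set_decode_lists_code: "finite A \<Longrightarrow> set_decode (lists_code A) = (\<lambda>s. 2 * list_encode s) ` A"
  by (simp add: lists_code_def)

lemma code_lists_lists_code [simp]: "finite A \<Longrightarrow> code_lists (lists_code A) = A"
  by (auto simp: code_lists_def set_decode_lists_code list_encode_eq)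

lemma even_bits_lists_code: "finite A \<Longrightarrow> even_bits (lists_code A)"
  by (auto simp: even_bits_def set_decode_lists_code)

lemma set_decode_even_bits:
  assumes "even_bits n"
  shows "set_decode n = (\<lambda>s. 2 * list_encode s) ` code_lists n"
proof
  show "set_decode n \<subseteq> (\<lambda>s. 2 * list_encode s) ` code_lists n"
  proof
    fix i assume i: "i \<in> set_decode n"
    with assms have "i = 2 * list_encode (list_decode (i div 2))"
      by (simp add: even_bits_def)
    with i show "i \<in> (\<lambda>s. 2 * list_encode s) ` code_lists n"
      by (auto simp: code_lists_def intro!: image_eqI[of _ _ "list_decode (i div 2)"])
  qed
qed (auto simp: code_lists_def)

lemma inj_on_code_lists: "inj_on code_lists {n. even_bits n}"
  by (rule inj_onI) (metis mem_Collect_eq set_decode_even_bits set_decode_inverse)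

lemma code_lists_add:
  assumes "even_bits a" "even_bits b" "even_bits (a + b)"
  shows "code_lists (a + b) = code_lists a \<union> code_lists b"
  using set_decode_add_disjoint[OF set_decode_add_even[OF assms]] by (auto simp: code_lists_def)

lemma lists_code_eq_sum: "finite A \<Longrightarrow> lists_code A = (\<Sum>s\<in>A. lists_code {s})"
  unfolding lists_code_def set_encode_def
  by (simp add: sum.reindex inj_on_subset[OF inj_double_list_encode])

lemma arg_max_on_nat:
  fixes f :: "'a \<Rightarrow> nat"
  assumes "finite A" "A \<noteq> {}"
  shows "arg_max_on f A \<in> A" and "x \<in> A \<Longrightarrow> f x \<le> f (arg_max_on f A)"
proof -
  obtain a where "a \<in> A"
    using assms(2) by blast
  moreover have "\<forall>x. x \<in> A \<longrightarrow> f x < Suc (Max (f ` A))"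
    using assms(1) by (simp add: le_imp_less_Suc)
  ultimately have "arg_max_on f A \<in> A \<and> (\<forall>x. x \<in> A \<longrightarrow> f x \<le> f (arg_max_on f A))"
    unfolding arg_max_on_def by (rule arg_max_nat_lemma)
  then show "arg_max_on f A \<in> A" and "x \<in> A \<Longrightarrow> f x \<le> f (arg_max_on f A)"
    by blast+
qed

definition chain_code :: "nat \<Rightarrow> bool" where
  "chain_code n \<longleftrightarrow> even_bits n \<and> code_lists n \<noteq> {} \<and> prefix_chain (code_lists n)"

definition chain_top :: "nat \<Rightarrow> nat list" where
  "chain_top n = arg_max_on length (code_lists n)"

lemma chain_top_in: "chain_code n \<Longrightarrow> chain_top n \<in> code_lists n"
  unfolding chain_code_def chain_top_def by (simp add: arg_max_on_nat)

lemma length_le_chain_top: "chain_code n \<Longrightarrow> s \<in> code_lists n \<Longrightarrow> length s \<le> length (chain_top n)"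
  unfolding chain_code_def chain_top_def by (simp add: arg_max_on_nat)

definition zero_extend :: "nat list \<Rightarrow> nat \<Rightarrow> nat" where
  "zero_extend s i = (if i < length s then s ! i else 0)"

lemma zero_extend_in_cylinder: "N \<le> n \<Longrightarrow> zero_extend (map x [0..<n]) \<in> cylinder x N"
  by (simp add: zero_extend_def cylinder_def)

definition chain_seq :: "((nat \<Rightarrow> nat) \<Rightarrow> 'a) \<Rightarrow> nat \<Rightarrow> 'a" where
  "chain_seq f n = (if chain_code n then f (zero_extend (chain_top n)) else f (\<lambda>_. 0))"

lemma prefix_initial_segment:
  assumes "i \<le> j"
  shows "prefix (map x [0..<i]) (map x [0..<j])"
proof -
  have "map x [0..<i] = take i (map x [0..<j])"
    using assms by (simp add: take_map)
  then show ?thesis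
    by (simp only: take_is_prefix)
qed

lemma chain_code_initial_segments:
  assumes "finite J" "J \<noteq> {}"
  shows "chain_code (lists_code ((\<lambda>j. map x [0..<j]) ` J))" (is "chain_code ?n")
    and "chain_top (lists_code ((\<lambda>j. map x [0..<j]) ` J)) = map x [0..<Max J]"
proof -
  let ?A = "(\<lambda>j. map x [0..<j]) ` J"
  have "prefix_chain ?A"
    unfolding prefix_chain_def
  proof (intro ballI)
    fix s t assume "s \<in> ?A" "t \<in> ?A"
    then obtain i j where "s = map x [0..<i]" "t = map x [0..<j]"
      by blast
    then show "prefix s t \<or> prefix t s"
      by (cases "i \<le> j") (simp_all add: prefix_initial_segment)
  qed
  then show chain: "chain_code ?n"
    using assms by (simp add: chain_code_def even_bits_lists_code)
  obtain j0 where j0: "j0 \<in> J" "chain_top ?n = map x [0..<j0]"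
    using chain_top_in[OF chain] assms(1) by auto
  have "j \<le> j0" if "j \<in> J" for j
    using length_le_chain_top[OF chain, of "map x [0..<j]"] that assms(1) j0(2) by simp
  then have "j0 = Max J"
    using j0(1) assms(1) by (intro Max_eqI[symmetric]) auto
  with j0(2) show "chain_top ?n = map x [0..<Max J]"
    by simp
qed

lemma chain_seq_sum_initial_segments:
  assumes "finite J" "J \<noteq> {}"
  shows "chain_seq f (\<Sum>j\<in>J. lists_code {map x [0..<j]}) = f (zero_extend (map x [0..<Max J]))"
proof -
  have "inj (\<lambda>j. map x [0..<j])"
    by (rule injI) (metis diff_zero length_map length_upt)
  then have "(\<Sum>j\<in>J. lists_code {map x [0..<j]}) = lists_code ((\<lambda>j. map x [0..<j]) ` J)"
    using assms(1) lists_code_eq_sum[of "(\<lambda>j. map x [0..<j]) ` J"] by (simp add: sum.reindex inj_on_subset)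
  then show ?thesis
    using chain_code_initial_segments[OF assms] by (simp add: chain_seq_def)
qed

lemma inj_lists_code_initial_segments: "inj (\<lambda>j. lists_code {map x [0..<j]})"
proof (rule injI)
  fix i j assume "lists_code {map x [0..<i]} = lists_code {map x [0..<j]}"
  then have "code_lists (lists_code {map x [0..<i]}) = code_lists (lists_code {map x [0..<j]})"
    by (rule arg_cong)
  then show "i = j"
    by simp (metis diff_zero length_map length_upt)
qed

lemma in_H_limits_chain_seq:
  assumes f: "continuous_on UNIV f"
  shows "f x \<in> H_limits (chain_seq f)"
proof -
  define g where "g j = lists_code {map x [0..<j]}" for j
  have inj_g: "inj g"
    unfolding g_def by (rule inj_lists_code_initial_segments)
  show ?thesis
    unfolding H_limits_eq_sum_limits
  proof (rule sum_limitsI)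
    show "infinite (range g)"
      using inj_g by (rule range_inj_infinite)
  next
    fix U assume U: "open U" "f x \<in> U"
    then have "open (f -` U)" "x \<in> f -` U"
      using f by (auto intro: open_vimage)
    then obtain N where N: "cylinder x N \<subseteq> f -` U"
      by (rule open_imp_cylinder)
    have "chain_seq f (\<Sum>\<alpha>) \<in> U"
      if \<alpha>: "finite \<alpha>" "\<alpha> \<noteq> {}" "\<alpha> \<subseteq> range g" "Suc (\<Sum>j<N. g j) \<le> \<Sum>\<alpha>" for \<alpha>
    proof -
      define J where "J = g -` \<alpha>"
      have "g ` J = \<alpha>"
        using \<alpha>(3) by (auto simp: J_def)
      moreover have "\<Sum>(g ` J) = (\<Sum>j\<in>J. g j)"
        by (simp add: sum.reindex inj_on_subset[OF inj_g])
      ultimately have \<alpha>_eq: "\<Sum>\<alpha> = (\<Sum>j\<in>J. g j)"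
        by simp
      have "finite J"
        using \<alpha>(1) inj_g by (simp add: J_def finite_vimageI)
      have "\<not> J \<subseteq> {..<N}"
      proof
        assume "J \<subseteq> {..<N}"
        then have "\<Sum>\<alpha> \<le> (\<Sum>j<N. g j)"
          unfolding \<alpha>_eq by (simp add: sum_mono2)
        with \<alpha>(4) show False
          by simp
      qed
      then obtain j where "j \<in> J" "N \<le> j"
        by (auto simp: subset_iff not_less)
      then have "J \<noteq> {}" "N \<le> Max J"
        using le_trans[OF _ Max_ge[OF \<open>finite J\<close>]] by blast+
      then have "chain_seq f (\<Sum>\<alpha>) = f (zero_extend (map x [0..<Max J]))"
        using chain_seq_sum_initial_segments[OF \<open>finite J\<close>] by (simp add: \<alpha>_eq g_def)
      with N \<open>N \<le> Max J\<close> show ?thesis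
        using zero_extend_in_cylinder[of N "Max J" x] by auto
    qed
    then show "\<exists>M. \<forall>\<alpha>. finite \<alpha> \<and> \<alpha> \<noteq> {} \<and> \<alpha> \<subseteq> range g \<and> M \<le> \<Sum>\<alpha> \<longrightarrow> chain_seq f (\<Sum>\<alpha>) \<in> U"
      by auto
  qed
qed

lemma prefix_chain_UN_chain_codes:
  assumes codes: "\<And>\<alpha>. finite \<alpha> \<Longrightarrow> \<alpha> \<noteq> {} \<Longrightarrow> \<alpha> \<subseteq> D \<Longrightarrow> chain_code (\<Sum>\<alpha>)"
  shows "prefix_chain (\<Union>d\<in>D. code_lists d)"
  unfolding prefix_chain_def
proof (intro ballI)
  fix s t assume "s \<in> (\<Union>d\<in>D. code_lists d)" "t \<in> (\<Union>d\<in>D. code_lists d)"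
  then obtain d d' where d: "d \<in> D" "d' \<in> D" "s \<in> code_lists d" "t \<in> code_lists d'"
    by blast
  have "chain_code d" "chain_code d'"
    using codes[of "{d}"] codes[of "{d'}"] d(1,2) by simp_all
  show "prefix s t \<or> prefix t s"
  proof (cases "d = d'")
    case True
    with d(3,4) \<open>chain_code d\<close> show ?thesis
      by (simp add: chain_code_def prefix_chain_def)
  next
    case False
    then have "chain_code (d + d')"
      using codes[of "{d, d'}"] d(1,2) by simp
    moreover have "code_lists (d + d') = code_lists d \<union> code_lists d'"
      using \<open>chain_code d\<close> \<open>chain_code d'\<close> \<open>chain_code (d + d')\<close>
      by (intro code_lists_add) (simp_all add: chain_code_def)
    ultimately show ?thesis
      using d(3,4) by (simp add: chain_code_def prefix_chain_def)
  qed
qed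

lemma finite_short_chain_tops:
  assumes "prefix_chain U" "inj_on code_lists D" "\<And>d. d \<in> D \<Longrightarrow> chain_code d \<and> code_lists d \<subseteq> U"
  shows "finite {d\<in>D. length (chain_top d) < N}"
proof (rule inj_on_finite[where B = "Pow {s\<in>U. length s < N}"])
  show "inj_on code_lists {d\<in>D. length (chain_top d) < N}"
    using assms(2) by (rule inj_on_subset) auto
  show "code_lists ` {d\<in>D. length (chain_top d) < N} \<subseteq> Pow {s\<in>U. length s < N}"
    using assms(3) length_le_chain_top by fastforce
  show "finite (Pow {s\<in>U. length s < N})"
    using prefix_chain_finite_shorter[OF assms(1)] by simp
qed

lemma chain_codes_branch:
  assumes "infinite D"
    and codes: "\<And>\<alpha>. finite \<alpha> \<Longrightarrow> \<alpha> \<noteq> {} \<Longrightarrow> \<alpha> \<subseteq> D \<Longrightarrow> chain_code (\<Sum>\<alpha>)"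
  obtains x where "\<And>N. finite {d\<in>D. zero_extend (chain_top d) \<notin> cylinder x N}"
proof -
  define U where "U = (\<Union>d\<in>D. code_lists d)"
  have chain: "prefix_chain U"
    unfolding U_def using codes by (rule prefix_chain_UN_chain_codes)
  have code: "chain_code d" if "d \<in> D" for d
    using codes[of "{d}"] that by simp
  have inj: "inj_on code_lists D"
    using code by (intro inj_on_subset[OF inj_on_code_lists]) (auto simp: chain_code_def)
  have "infinite U"
  proof
    assume "finite U"
    moreover have "code_lists ` D \<subseteq> Pow U"
      by (auto simp: U_def)
    ultimately show False
      using inj_on_finite[OF inj] \<open>infinite D\<close> by (meson finite_Pow_iff)
  qed
  with chain obtain x where x: "\<And>s. s \<in> U \<Longrightarrow> s = map x [0..<length s]"
    using infinite_prefix_chain_branch by blast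
  show thesis
  proof (rule that)
    fix N
    have "{d\<in>D. zero_extend (chain_top d) \<notin> cylinder x N} \<subseteq> {d\<in>D. length (chain_top d) < N}"
    proof
      fix d assume "d \<in> {d\<in>D. zero_extend (chain_top d) \<notin> cylinder x N}"
      then have d: "d \<in> D" "zero_extend (chain_top d) \<notin> cylinder x N"
        by simp_all
      then have "chain_top d \<in> U"
        using chain_top_in code by (auto simp: U_def)
      then have "chain_top d = map x [0..<length (chain_top d)]"
        by (rule x)
      then have "length (chain_top d) < N"
        using d(2) zero_extend_in_cylinder[of N "length (chain_top d)" x] by (metis not_less)
      with d(1) show "d \<in> {d\<in>D. length (chain_top d) < N}"
        by simp
    qed
    moreover have "finite {d\<in>D. length (chain_top d) < N}"
      using chain inj by (rule finite_short_chain_tops) (auto simp: code U_def)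
    ultimately show "finite {d\<in>D. zero_extend (chain_top d) \<notin> cylinder x N}"
      by (rule finite_subset)
  qed
qed

lemma tendsto_cylinderI:
  assumes "\<And>N. eventually (\<lambda>d. g d \<in> cylinder x N) F"
  shows "(g \<longlongrightarrow> (x :: nat \<Rightarrow> nat)) F"
proof (rule topological_tendstoI)
  fix S assume "open S" "x \<in> S"
  then obtain N where "cylinder x N \<subseteq> S"
    by (rule open_imp_cylinder)
  with assms[of N] show "eventually (\<lambda>d. g d \<in> S) F"
    by (rule eventually_mono[OF _ subsetD])
qed

lemma eventually_cofinite_inf_principal:
  "eventually P (inf cofinite (principal D)) \<longleftrightarrow> finite {d\<in>D. \<not> P d}"
  unfolding eventually_inf_principal eventually_cofinite by (simp add: conj_commute)

lemma cofinite_inf_principal_neq_bot: "infinite D \<Longrightarrow> inf cofinite (principal D) \<noteq> bot"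
  unfolding trivial_limit_def eventually_cofinite_inf_principal by simp

lemma tendsto_chain_seq_branch:
  assumes f: "continuous_on UNIV f" and "infinite D"
    and codes: "\<And>\<alpha>. finite \<alpha> \<Longrightarrow> \<alpha> \<noteq> {} \<Longrightarrow> \<alpha> \<subseteq> D \<Longrightarrow> chain_code (\<Sum>\<alpha>)"
  obtains x where "(chain_seq f \<longlongrightarrow> f x) (inf cofinite (principal D))"
proof -
  obtain x where x: "\<And>N. finite {d\<in>D. zero_extend (chain_top d) \<notin> cylinder x N}"
    using chain_codes_branch[OF \<open>infinite D\<close> codes] by blast
  have "(chain_seq f \<longlongrightarrow> f x) (inf cofinite (principal D))"
  proof (rule Lim_transform_eventually)
    have "((\<lambda>d. zero_extend (chain_top d)) \<longlongrightarrow> x) (inf cofinite (principal D))"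
      by (rule tendsto_cylinderI) (simp add: eventually_cofinite_inf_principal x)
    then show "((\<lambda>d. f (zero_extend (chain_top d))) \<longlongrightarrow> f x) (inf cofinite (principal D))"
      by (rule continuous_on_tendsto_compose[OF f]) simp_all
    have "chain_code d" if "d \<in> D" for d
      using codes[of "{d}"] that by simp
    then have "{d\<in>D. f (zero_extend (chain_top d)) \<noteq> chain_seq f d} = {}"
      by (auto simp: chain_seq_def)
    then show "eventually (\<lambda>d. f (zero_extend (chain_top d)) = chain_seq f d) (inf cofinite (principal D))"
      unfolding eventually_cofinite_inf_principal by (simp only: finite.emptyI)
  qed
  then show thesis
    by (rule that)
qed

lemma FS_limits_chain_seq_subset:
  fixes f :: "(nat \<Rightarrow> nat) \<Rightarrow> 'a::t2_space"
  assumes f: "continuous_on UNIV f"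
  shows "FS_limits (chain_seq f) \<subseteq> range f"
proof
  fix \<eta> assume "\<eta> \<in> FS_limits (chain_seq f)"
  then obtain D where D: "infinite D"
    and lim: "\<And>U. open U \<Longrightarrow> \<eta> \<in> U \<Longrightarrow>
      \<exists>M. \<forall>\<alpha>. finite \<alpha> \<and> \<alpha> \<noteq> {} \<and> \<alpha> \<subseteq> D \<and> \<alpha> \<subseteq> {M..} \<longrightarrow> chain_seq f (\<Sum>\<alpha>) \<in> U"
    unfolding FS_limits_eq_sum_limits by (rule sum_limitsE) auto
  show "\<eta> \<in> range f"
  proof (cases "\<eta> = f (\<lambda>_. 0)")
    case False
    then obtain M0 where M0: "\<forall>\<alpha>. finite \<alpha> \<and> \<alpha> \<noteq> {} \<and> \<alpha> \<subseteq> D \<and> \<alpha> \<subseteq> {M0..} \<longrightarrow>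
        chain_seq f (\<Sum>\<alpha>) \<in> - {f (\<lambda>_. 0)}"
      using lim[of "- {f (\<lambda>_. 0)}"] by auto
    define D' where "D' = D - {..<M0}"
    have "infinite D'"
      unfolding D'_def using D by (rule Diff_infinite_finite[rotated]) simp
    have "chain_code (\<Sum>\<alpha>)" if "finite \<alpha>" "\<alpha> \<noteq> {}" "\<alpha> \<subseteq> D'" for \<alpha>
      using M0 that by (auto simp: D'_def subset_iff not_less chain_seq_def split: if_splits)
    with \<open>infinite D'\<close> obtain x where x: "(chain_seq f \<longlongrightarrow> f x) (inf cofinite (principal D'))"
      using tendsto_chain_seq_branch[OF f] by metis
    have "(chain_seq f \<longlongrightarrow> \<eta>) (inf cofinite (principal D'))"
    proof (rule topological_tendstoI)
      fix U assume "open U" "\<eta> \<in> U"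
      then obtain M where M: "\<forall>\<alpha>. finite \<alpha> \<and> \<alpha> \<noteq> {} \<and> \<alpha> \<subseteq> D \<and> \<alpha> \<subseteq> {M..} \<longrightarrow> chain_seq f (\<Sum>\<alpha>) \<in> U"
        using lim by blast
      have "{d\<in>D'. chain_seq f d \<notin> U} \<subseteq> {..<M}"
      proof
        fix d assume "d \<in> {d\<in>D'. chain_seq f d \<notin> U}"
        then show "d \<in> {..<M}"
          using M[rule_format, of "{d}"] by (auto simp: D'_def not_less[symmetric])
      qed
      then show "eventually (\<lambda>d. chain_seq f d \<in> U) (inf cofinite (principal D'))"
        unfolding eventually_cofinite_inf_principal by (rule finite_subset) simp
    qed
    with x have "\<eta> = f x"
      using cofinite_inf_principal_neq_bot[OF \<open>infinite D'\<close>] by (intro tendsto_unique) simp_all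
    then show ?thesis
      by simp
  qed simp
qed

lemma limits_chain_seq:
  fixes f :: "(nat \<Rightarrow> nat) \<Rightarrow> 'a::t2_space"
  assumes "continuous_on UNIV f"
  shows "FS_limits (chain_seq f) = range f" and "H_limits (chain_seq f) = range f"
proof -
  have "range f \<subseteq> H_limits (chain_seq f)"
    using in_H_limits_chain_seq[OF assms] by blast
  moreover have "H_limits (chain_seq f) \<subseteq> FS_limits (chain_seq f)"
    by (rule H_limits_subset_FS_limits)
  moreover have "FS_limits (chain_seq f) \<subseteq> range f"
    using assms by (rule FS_limits_chain_seq_subset)
  ultimately show "FS_limits (chain_seq f) = range f" and "H_limits (chain_seq f) = range f"
    by auto
qed

lemma nonempty_analytic_set_eq_limits:
  fixes C :: "'a::t2_space set"
  assumes "analytic_set C" "C \<noteq> {}"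
  shows "\<exists>y. C = FS_limits y \<and> C = H_limits y"
proof -
  obtain f :: "(nat \<Rightarrow> nat) \<Rightarrow> 'a" where "continuous_on UNIV f" "range f = C"
    using assms by (auto simp: analytic_set_def)
  then show ?thesis
    using limits_chain_seq by metis
qed

lemma L_FS_eq_Sigma11: "(L_FS :: 'a::complete_space set set) = Sigma11"
proof
  show "L_FS \<subseteq> (Sigma11 :: 'a set set)"
    using analytic_set_empty by (auto simp: L_FS_def Sigma11_def analytic_FS_limits)
  show "Sigma11 \<subseteq> (L_FS :: 'a set set)"
    using nonempty_analytic_set_eq_limits by (fastforce simp: L_FS_def Sigma11_def)
qed

lemma L_H_eq_Sigma11: "(L_H :: 'a::complete_space set set) = Sigma11"
proof
  show "L_H \<subseteq> (Sigma11 :: 'a set set)"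
    using analytic_set_empty by (auto simp: L_H_def Sigma11_def analytic_H_limits)
  show "Sigma11 \<subseteq> (L_H :: 'a set set)"
    using nonempty_analytic_set_eq_limits by (fastforce simp: L_H_def Sigma11_def)
qed

theorem theorem4p3:
  assumes "uncountable (UNIV :: 'a::polish_space set)"
  shows "(L_FS :: 'a set set) = Sigma11 \<and> (L_H :: 'a set set) = Sigma11 \<and>
         (\<forall>C :: 'a set. analytic_set C \<and> C \<noteq> {} \<longrightarrow>
            (\<exists>y. C = FS_limits y \<and> C = H_limits y))"
  using L_FS_eq_Sigma11 L_H_eq_Sigma11 nonempty_analytic_set_eq_limits by blast

end
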